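(* Let $L\in\mathbb{R}^{n\times n}$ be a real symmetric positive semidefinite matrix, let $U_k\in\mathbb{R}^{n\times k}$ have orthonormal columns that are eigenvectors of $L$, and let $\mathrm{span}(U_k)$ denote its column space. Let $\beta>0$, let $\mathrm{E},\mathrm{E}_{\text{model}}\in\mathbb{R}$, and set $a=\mathrm{E}-\mathrm{E}_{\text{model}}$. For $\phi,\rho\in\mathbb{R}^n$ define \[ \mathcal{L}(\phi,\rho)=\beta\,\|L\phi-\rho\|_2^2+\Big(a+\tfrac12\,\phi^\top\rho\Big)^2 . \] For $\phi\in\mathrm{span}(U_k)$ let $\rho^\star(\phi)=L\phi-t^\star(\phi)\phi$ with $t^\star(\phi)=\dfrac{a+\frac12\phi^\top L\phi}{2\beta+\frac12\|\phi\|_2^2}$ (the unique minimizer of $\rho\mapsto\mathcal{L}(\phi,\rho)$ over $\mathrm{span}(U_k)$), and define $A(\phi)=a+\tfrac12\,\phi^\top L\phi$. Then \[ \widetilde{\mathcal{L}}(\phi):=\mathcal{L}\big(\phi,\rho^\star(\phi)\big)=A(\phi)^2\,\frac{4\beta}{4\beta+\|\phi\|_2^2}\;\le\;A(\phi)^2, \] with equality if and only if $A(\phi)=0$ or $\phi=0$.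
   Context: $\mathcal{L}$ is the (squared, $L^2$) surrogate training objective combining a Poisson-equation residual $\|L\phi-\rho\|^2$ weighted by $\beta$ with a squared energy term involving the electrostatic energy $\frac12\phi^\top\rho$; $\phi$ plays the role of a potential and $\rho$ of charges on the nodes of a graph with Laplacian $L$. *)

theory Defs
  imports "HOL-Analysis.Analysis"
begin

definition surrogate_loss ::
  "real \<Rightarrow> real \<Rightarrow> real^'n^'n \<Rightarrow> real^'n \<Rightarrow> real^'n \<Rightarrow> real" where
  "surrogate_loss \<beta> a L \<phi> \<rho> =
     \<beta> * (norm (L *v \<phi> - \<rho>))\<^sup>2 + (a + 1/2 * (\<phi> \<bullet> \<rho>))\<^sup>2"

definition t_star :: "real \<Rightarrow> real \<Rightarrow> real^'n^'n \<Rightarrow> real^'n \<Rightarrow> real" where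
  "t_star \<beta> a L \<phi> = (a + 1/2 * (\<phi> \<bullet> (L *v \<phi>))) / (2 * \<beta> + 1/2 * (norm \<phi>)\<^sup>2)"

definition rho_star :: "real \<Rightarrow> real \<Rightarrow> real^'n^'n \<Rightarrow> real^'n \<Rightarrow> real^'n" where
  "rho_star \<beta> a L \<phi> = L *v \<phi> - t_star \<beta> a L \<phi> *\<^sub>R \<phi>"

definition A_fun :: "real \<Rightarrow> real^'n^'n \<Rightarrow> real^'n \<Rightarrow> real" where
  "A_fun a L \<phi> = a + 1/2 * (\<phi> \<bullet> (L *v \<phi>))"

end

theory Submission
  imports Defs
begin

text \<open>For fixed \<open>\<phi>\<close> the loss is a strictly convex quadratic in \<open>\<rho>\<close>. At \<open>\<rho>\<^sup>\<star>\<close> the energy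
  term equals \<open>2 \<beta> t\<^sup>\<star>\<close> (the first-order condition), so the cross terms of the expansion around
  \<open>\<rho>\<^sup>\<star>\<close> cancel and \<open>\<L>(\<rho>) = \<L>(\<rho>\<^sup>\<star>) + \<beta> \<parallel>\<rho>\<^sup>\<star> - \<rho>\<parallel>\<^sup>2 + (\<phi> \<bullet> (\<rho>\<^sup>\<star> - \<rho>))\<^sup>2 / 4\<close>. Since
  \<open>L \<phi> - \<rho>\<^sup>\<star> = t\<^sup>\<star> \<phi>\<close>, the minimum is \<open>\<beta> t\<^sup>\<star>\<^sup>2 (\<parallel>\<phi>\<parallel>\<^sup>2 + 4 \<beta>) = A\<^sup>2 \<cdot> 4\<beta> / (4\<beta> + \<parallel>\<phi>\<parallel>\<^sup>2)\<close>.
  Membership of \<open>\<rho>\<^sup>\<star>\<close> in the span only uses that the span of eigenvectors is \<open>L\<close>-invariant.\<close>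

lemma span_invariant_of_eigenvectors:
  assumes "linear f" and "\<forall>x\<in>S. \<exists>c. f x = c *\<^sub>R x" and "x \<in> span S"
  shows "f x \<in> span S"
proof -
  have "f ` S \<subseteq> span S"
    using assms(2) by (metis image_subsetI span_base span_mul)
  then have "span (f ` S) \<subseteq> span S"
    by (simp add: span_minimal)
  moreover have "f x \<in> span (f ` S)"
    using span_linear_image[OF assms(1)] assms(3) by blast
  ultimately show ?thesis
    by blast
qed

lemma rho_star_in_span_eigenvectors:
  assumes "\<forall>u\<in>S. \<exists>c. L *v u = c *\<^sub>R u" and "\<phi> \<in> span S"
  shows "rho_star \<beta> a L \<phi> \<in> span S"
  unfolding rho_star_def
  using span_invariant_of_eigenvectors[of "(*v) L"] assms
  by (intro span_diff span_mul) auto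

lemma t_star_eq_A_fun:
  "t_star \<beta> a L \<phi> = 2 * A_fun a L \<phi> / (4 * \<beta> + (norm \<phi>)\<^sup>2)"
  unfolding t_star_def A_fun_def by (simp add: field_simps)

lemma energy_term_rho_star:
  assumes "\<beta> > 0"
  shows "a + 1/2 * (\<phi> \<bullet> rho_star \<beta> a L \<phi>) = 2 * \<beta> * t_star \<beta> a L \<phi>"
proof -
  have "2 * \<beta> + 1/2 * (norm \<phi>)\<^sup>2 \<noteq> 0"
    using assms zero_le_power2[of "norm \<phi>"] by linarith
  then have "t_star \<beta> a L \<phi> * (2 * \<beta> + 1/2 * (norm \<phi>)\<^sup>2) = a + 1/2 * (\<phi> \<bullet> (L *v \<phi>))"
    unfolding t_star_def by simp
  then show ?thesis
    unfolding rho_star_def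
    by (simp add: inner_diff_right power2_norm_eq_inner algebra_simps)
qed

lemma surrogate_loss_expand_at_rho_star:
  assumes "\<beta> > 0"
  shows "surrogate_loss \<beta> a L \<phi> \<rho> = surrogate_loss \<beta> a L \<phi> (rho_star \<beta> a L \<phi>)
           + \<beta> * (norm (rho_star \<beta> a L \<phi> - \<rho>))\<^sup>2 + (\<phi> \<bullet> (rho_star \<beta> a L \<phi> - \<rho>))\<^sup>2 / 4"
proof -
  define t where "t = t_star \<beta> a L \<phi>"
  define d where "d = rho_star \<beta> a L \<phi> - \<rho>"
  have "L *v \<phi> - \<rho> = t *\<^sub>R \<phi> + d"
    unfolding t_def d_def rho_star_def by simp
  moreover have "a + 1/2 * (\<phi> \<bullet> \<rho>) = 2 * \<beta> * t - 1/2 * (\<phi> \<bullet> d)"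
    using energy_term_rho_star[OF assms, of a \<phi> L] unfolding t_def d_def
    by (simp add: inner_diff_right field_simps)
  ultimately have "surrogate_loss \<beta> a L \<phi> \<rho>
      = \<beta> * (norm (t *\<^sub>R \<phi> + d))\<^sup>2 + (2 * \<beta> * t - 1/2 * (\<phi> \<bullet> d))\<^sup>2"
    unfolding surrogate_loss_def by simp
  also have "(norm (t *\<^sub>R \<phi> + d))\<^sup>2 = t\<^sup>2 * (norm \<phi>)\<^sup>2 + 2 * t * (\<phi> \<bullet> d) + (norm d)\<^sup>2"
    unfolding power2_norm_eq_inner
    by (simp add: inner_add_left inner_add_right inner_commute power2_eq_square)
  also have "surrogate_loss \<beta> a L \<phi> (rho_star \<beta> a L \<phi>)
      = \<beta> * (t\<^sup>2 * (norm \<phi>)\<^sup>2) + (2 * \<beta> * t)\<^sup>2"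
    unfolding surrogate_loss_def energy_term_rho_star[OF assms] t_def
    by (simp add: rho_star_def power_mult_distrib)
  ultimately show ?thesis
    unfolding d_def[symmetric] by (simp add: power2_eq_square algebra_simps)
qed

lemma surrogate_loss_rho_star:
  assumes "\<beta> > 0"
  shows "surrogate_loss \<beta> a L \<phi> (rho_star \<beta> a L \<phi>)
           = (A_fun a L \<phi>)\<^sup>2 * (4 * \<beta> / (4 * \<beta> + (norm \<phi>)\<^sup>2))"
proof -
  define t where "t = t_star \<beta> a L \<phi>"
  define s where "s = (norm \<phi>)\<^sup>2"
  have pos: "4 * \<beta> + s > 0"
    unfolding s_def using assms by (simp add: add_pos_nonneg)
  have "surrogate_loss \<beta> a L \<phi> (rho_star \<beta> a L \<phi>) = \<beta> * t\<^sup>2 * (4 * \<beta> + s)"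
    unfolding surrogate_loss_def energy_term_rho_star[OF assms] t_def s_def
    by (simp add: rho_star_def power_mult_distrib power2_eq_square algebra_simps)
  also have "\<dots> = \<beta> * (t * (4 * \<beta> + s))\<^sup>2 / (4 * \<beta> + s)"
    using pos by (simp add: power2_eq_square)
  also have "t * (4 * \<beta> + s) = 2 * A_fun a L \<phi>"
    unfolding t_def t_star_eq_A_fun s_def[symmetric] using pos by simp
  also have "\<beta> * (2 * A_fun a L \<phi>)\<^sup>2 / (4 * \<beta> + s) = (A_fun a L \<phi>)\<^sup>2 * (4 * \<beta> / (4 * \<beta> + s))"
    by (simp add: power_mult_distrib)
  finally show ?thesis
    unfolding s_def .
qed

lemma surrogate_loss_rho_star_less:
  assumes "\<beta> > 0" and "\<rho> \<noteq> rho_star \<beta> a L \<phi>"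
  shows "surrogate_loss \<beta> a L \<phi> (rho_star \<beta> a L \<phi>) < surrogate_loss \<beta> a L \<phi> \<rho>"
proof -
  have "\<beta> * (norm (rho_star \<beta> a L \<phi> - \<rho>))\<^sup>2 > 0"
    using assms by simp
  then show ?thesis
    unfolding surrogate_loss_expand_at_rho_star[OF assms(1), of a L \<phi> \<rho>]
    by (simp add: add_pos_nonneg)
qed

lemma mult_shrink_factor_le:
  fixes c s x :: real
  assumes "c > 0" and "s \<ge> 0"
  shows "x\<^sup>2 * (c / (c + s)) \<le> x\<^sup>2"
  using assms mult_left_le[of "c / (c + s)" "x\<^sup>2"] by simp

lemma mult_shrink_factor_eq_iff:
  fixes c s x :: real
  assumes "c > 0" and "s \<ge> 0"
  shows "x\<^sup>2 * (c / (c + s)) = x\<^sup>2 \<longleftrightarrow> x = 0 \<or> s = 0"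
  using assms by (auto simp: field_simps)

theorem theorem2:
  fixes L :: "real^'n^'n" and U :: "real^'k^'n"
    and \<beta> E E_model :: real and \<phi> :: "real^'n"
  assumes symm: "transpose L = L"
    and psd: "\<forall>x. 0 \<le> x \<bullet> (L *v x)"
    and orth: "transpose U ** U = mat 1"
    and eig: "\<forall>j. \<exists>c. L *v column j U = c *\<^sub>R column j U"
    and beta_pos: "\<beta> > 0"
    and phi_span: "\<phi> \<in> span (columns U)"
  shows "rho_star \<beta> (E - E_model) L \<phi> \<in> span (columns U)
    \<and> (\<forall>\<rho> \<in> span (columns U). \<rho> \<noteq> rho_star \<beta> (E - E_model) L \<phi> \<longrightarrow>
          surrogate_loss \<beta> (E - E_model) L \<phi> (rho_star \<beta> (E - E_model) L \<phi>)
            < surrogate_loss \<beta> (E - E_model) L \<phi> \<rho>)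
    \<and> surrogate_loss \<beta> (E - E_model) L \<phi> (rho_star \<beta> (E - E_model) L \<phi>)
        = (A_fun (E - E_model) L \<phi>)\<^sup>2 * (4 * \<beta> / (4 * \<beta> + (norm \<phi>)\<^sup>2))
    \<and> surrogate_loss \<beta> (E - E_model) L \<phi> (rho_star \<beta> (E - E_model) L \<phi>)
        \<le> (A_fun (E - E_model) L \<phi>)\<^sup>2
    \<and> (surrogate_loss \<beta> (E - E_model) L \<phi> (rho_star \<beta> (E - E_model) L \<phi>)
          = (A_fun (E - E_model) L \<phi>)\<^sup>2
        \<longleftrightarrow> A_fun (E - E_model) L \<phi> = 0 \<or> \<phi> = 0)"
proof -
  have "\<forall>u\<in>columns U. \<exists>c. L *v u = c *\<^sub>R u"
    using eig by (auto simp: columns_def)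
  then have "rho_star \<beta> (E - E_model) L \<phi> \<in> span (columns U)"
    using phi_span by (rule rho_star_in_span_eigenvectors)
  moreover have "4 * \<beta> > 0" and "(norm \<phi>)\<^sup>2 \<ge> 0"
    using beta_pos by simp_all
  note shrink = mult_shrink_factor_le[OF this] mult_shrink_factor_eq_iff[OF this]
  moreover have "\<forall>\<rho> \<in> span (columns U). \<rho> \<noteq> rho_star \<beta> (E - E_model) L \<phi> \<longrightarrow>
      surrogate_loss \<beta> (E - E_model) L \<phi> (rho_star \<beta> (E - E_model) L \<phi>)
        < surrogate_loss \<beta> (E - E_model) L \<phi> \<rho>"
    using surrogate_loss_rho_star_less[OF beta_pos] by blast
  ultimately show ?thesis
    unfolding surrogate_loss_rho_star[OF beta_pos] shrink by simp
qed

end
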